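(* Let $(X,d)$ be a metric space, and let $K\in\mathcal{K}(X)$ and $u\in\mathcal{F}(X)$ satisfy $\delta:=d_E(\chi_K,u)<\tfrac12$. Then $d_H(K,u_\alpha)\le\delta$ for every $\alpha\in\,]\delta,1-\delta]$.
   Context: Let $\mathbb{I}=[0,1]$. For a fuzzy set $u:X\to\mathbb{I}$ on a metric space $(X,d)$, its $\alpha$-level is $u_\alpha=\{x\in X: u(x)\ge\alpha\}$ for $\alpha\in\,]0,1]$, and $u_0=\overline{\{x\in X: u(x)>0\}}$. $\mathcal{F}(X)$ denotes the set of upper-semicontinuous fuzzy sets $u$ such that $u_0$ is compact and $u_1\neq\varnothing$. $\mathcal{K}(X)$ is the set of non-empty compact subsets of $X$, and for non-empty closed sets $C_1,C_2$ the Hausdorff distance is $d_H(C_1,C_2)=\max\{\sup_{x\in C_1}d(x,C_2),\sup_{y\in C_2}d(y,C_1)\}$. For $K\in\mathcal{K}(X)$, $\chi_K$ is the characteristic function of $K$ (an element of $\mathcal{F}(X)$). On $X\times\mathbb{I}$ use the metric $\overline{d}((x,\alpha),(y,\beta))=\max\{d(x,y),|\alpha-\beta|\}$. The endograph of $u$ is $\operatorname{end}(u)=\{(x,\alpha)\in X\times\mathbb{I}: u(x)\ge\alpha\}$, and the endograph metric is $d_E(u,v)=\overline{d}_H(\operatorname{end}(u),\operatorname{end}(v))$, the Hausdorff distance in $(X\times\mathbb{I},\overline{d})$. *)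

theory Defs
  imports "HOL-Analysis.Analysis"
begin

definition hausdorff_dist :: "('b \<Rightarrow> 'b \<Rightarrow> real) \<Rightarrow> 'b set \<Rightarrow> 'b set \<Rightarrow> real" where
  "hausdorff_dist D A B =
     max (SUP x\<in>A. INF y\<in>B. D x y) (SUP y\<in>B. INF x\<in>A. D x y)"

definition dbar :: "('a::metric_space \<times> real) \<Rightarrow> ('a \<times> real) \<Rightarrow> real" where
  "dbar p q = max (dist (fst p) (fst q)) \<bar>snd p - snd q\<bar>"

definition level :: "('a::metric_space \<Rightarrow> real) \<Rightarrow> real \<Rightarrow> 'a set" where
  "level u \<alpha> = (if \<alpha> = 0 then closure {x. u x > 0} else {x. u x \<ge> \<alpha>})"

definition upper_semicont :: "('a::topological_space \<Rightarrow> real) \<Rightarrow> bool" where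
  "upper_semicont u \<longleftrightarrow> (\<forall>x. \<forall>e>0. \<forall>\<^sub>F y in at x. u y < u x + e)"

definition fuzzy_F :: "('a::metric_space \<Rightarrow> real) set" where
  "fuzzy_F = {u. (\<forall>x. 0 \<le> u x \<and> u x \<le> 1) \<and> upper_semicont u
                  \<and> compact (level u 0) \<and> level u 1 \<noteq> {}}"

definition charfun :: "'a set \<Rightarrow> 'a \<Rightarrow> real" where
  "charfun K x = (if x \<in> K then 1 else 0)"

definition endograph :: "('a \<Rightarrow> real) \<Rightarrow> ('a \<times> real) set" where
  "endograph u = {(x, \<alpha>). 0 \<le> \<alpha> \<and> \<alpha> \<le> 1 \<and> u x \<ge> \<alpha>}"

definition endo_dist :: "('a::metric_space \<Rightarrow> real) \<Rightarrow> ('a \<Rightarrow> real) \<Rightarrow> real" where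
  "endo_dist u v = hausdorff_dist dbar (endograph u) (endograph v)"

end

theory Submission
  imports Defs
begin

text \<open>A point \<open>(x, 1)\<close> of \<open>end \<chi>\<^sub>K\<close> lies within \<open>\<delta> + \<epsilon>\<close> of \<open>end u\<close>, so \<open>u\<close> has values
  above \<open>1 - \<delta> - \<epsilon> \<ge> \<alpha> - \<epsilon>\<close> within distance \<open>\<delta> + \<epsilon>\<close> of \<open>x\<close>; compactness of \<open>u\<^sub>0\<close> and upper
  semicontinuity of \<open>u\<close> turn these approximate points into a point of \<open>u\<^sub>\<alpha>\<close> within \<open>\<delta>\<close> of \<open>x\<close>.
  Conversely a point \<open>(y, \<alpha>)\<close> of \<open>end u\<close> lies within less than \<open>\<alpha>\<close> of \<open>end \<chi>\<^sub>K\<close>, and since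
  \<open>\<alpha> > \<delta>\<close> the nearby point of \<open>end \<chi>\<^sub>K\<close> has positive height, hence lies over \<open>K\<close>.\<close>

lemma hausdorff_dist_commute:
  assumes "\<And>x y. D x y = D y x"
  shows "hausdorff_dist D A B = hausdorff_dist D B A"
  unfolding hausdorff_dist_def by (subst max.commute) (simp only: assms)

lemma hausdorff_dist_le:
  assumes "A \<noteq> {}" "B \<noteq> {}" "\<And>x y. 0 \<le> D x y"
    and A_near_B: "\<And>x e. x \<in> A \<Longrightarrow> 0 < e \<Longrightarrow> \<exists>y\<in>B. D x y < d + e"
    and B_near_A: "\<And>y e. y \<in> B \<Longrightarrow> 0 < e \<Longrightarrow> \<exists>x\<in>A. D x y < d + e"
  shows "hausdorff_dist D A B \<le> d"
proof -
  have INF_le: "(INF z\<in>Z. f z) \<le> d"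
    if nonneg: "\<And>z. 0 \<le> f z" and near: "\<And>e. 0 < e \<Longrightarrow> \<exists>z\<in>Z. f z < d + e"
    for f :: "'b \<Rightarrow> real" and Z
  proof (rule field_le_epsilon)
    fix e :: real
    assume "0 < e"
    then obtain z where z: "z \<in> Z" "f z < d + e" using near by blast
    have "bdd_below (f ` Z)" using nonneg by (intro bdd_belowI[where m = 0]) auto
    then have "(INF z\<in>Z. f z) \<le> f z" using z(1) by (rule cINF_lower)
    with z(2) show "(INF z\<in>Z. f z) \<le> d + e" by linarith
  qed
  have "(SUP x\<in>A. INF y\<in>B. D x y) \<le> d"
  proof (rule cSUP_least[OF assms(1)])
    fix x assume "x \<in> A"
    show "(INF y\<in>B. D x y) \<le> d" by (rule INF_le[OF assms(3) A_near_B[OF \<open>x \<in> A\<close>]])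
  qed
  moreover have "(SUP y\<in>B. INF x\<in>A. D x y) \<le> d"
  proof (rule cSUP_least[OF assms(2)])
    fix y assume "y \<in> B"
    show "(INF x\<in>A. D x y) \<le> d"
      by (rule INF_le[of "\<lambda>x. D x y" A, OF assms(3) B_near_A[OF \<open>y \<in> B\<close>]])
  qed
  ultimately show ?thesis unfolding hausdorff_dist_def by simp
qed

lemma hausdorff_dist_lessD:
  assumes "x \<in> A" "B \<noteq> {}" "\<And>x y. 0 \<le> D x y"
    and "bdd_above ((\<lambda>x. INF y\<in>B. D x y) ` A)"
    and "hausdorff_dist D A B < e"
  shows "\<exists>y\<in>B. D x y < e"
proof -
  have "(INF y\<in>B. D x y) \<le> (SUP x\<in>A. INF y\<in>B. D x y)"
    using assms(4,1) by (rule cSUP_upper[rotated])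
  also have "\<dots> < e" using assms(5) unfolding hausdorff_dist_def by simp
  finally have "(INF y\<in>B. D x y) < e" .
  moreover have "bdd_below ((\<lambda>y. D x y) ` B)" using assms(3) by (intro bdd_belowI[where m = 0]) auto
  ultimately show ?thesis using cINF_less_iff[OF assms(2)] by blast
qed

lemma dbar_nonneg: "0 \<le> dbar p q"
  unfolding dbar_def by simp

lemma dbar_commute: "dbar p q = dbar q p"
  unfolding dbar_def by (simp add: dist_commute abs_minus_commute)

lemma bdd_above_INF_dbar_endograph:
  assumes "\<And>x. 0 \<le> v x"
  shows "bdd_above ((\<lambda>p. INF q\<in>endograph v. dbar p q) ` endograph u)"
proof (rule bdd_aboveI2)
  fix p assume "p \<in> endograph u"
  then have "dbar p (fst p, 0) \<le> 1" by (auto simp: endograph_def dbar_def)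
  moreover have "(fst p, 0) \<in> endograph v" using assms by (simp add: endograph_def)
  moreover have "bdd_below (dbar p ` endograph v)" by (intro bdd_belowI[where m = 0]) (auto simp: dbar_nonneg)
  ultimately show "(INF q\<in>endograph v. dbar p q) \<le> 1" by (meson cINF_lower2)
qed

lemma endo_dist_lessD:
  assumes "\<And>x. 0 \<le> v x" "p \<in> endograph u" "endo_dist u v < e"
  shows "\<exists>q\<in>endograph v. dbar p q < e"
proof (rule hausdorff_dist_lessD[OF assms(2) _ dbar_nonneg bdd_above_INF_dbar_endograph[OF assms(1)]])
  have "(undefined, 0) \<in> endograph v" using assms(1) by (simp add: endograph_def)
  then show "endograph v \<noteq> {}" by blast
  show "hausdorff_dist dbar (endograph u) (endograph v) < e" using assms(3) by (simp add: endo_dist_def)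
qed

lemma endo_dist_commute: "endo_dist u v = endo_dist v u"
  unfolding endo_dist_def by (rule hausdorff_dist_commute) (rule dbar_commute)

lemma endo_dist_nonneg:
  fixes u v :: "'a::metric_space \<Rightarrow> real"
  assumes "\<And>x. 0 \<le> u x" "\<And>x. 0 \<le> v x"
  shows "0 \<le> endo_dist u v"
proof (rule ccontr)
  assume "\<not> 0 \<le> endo_dist u v"
  then have "endo_dist u v < 0" by simp
  moreover have "(undefined :: 'a, 0) \<in> endograph u" using assms(1) by (simp add: endograph_def)
  ultimately obtain q where "dbar (undefined :: 'a, 0) q < 0"
    using endo_dist_lessD[of v, OF assms(2)] by blast
  then show False using dbar_nonneg not_le by blast
qed

lemma upper_semicont_closed_superlevel:
  assumes "upper_semicont u"
  shows "closed {x. \<beta> \<le> u x}"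
proof -
  have "open {x. u x < \<beta>}"
  proof (subst open_subopen, intro ballI)
    fix x assume x: "x \<in> {x. u x < \<beta>}"
    then have "0 < \<beta> - u x" by simp
    with assms have "\<forall>\<^sub>F y in at x. u y < u x + (\<beta> - u x)"
      unfolding upper_semicont_def by blast
    then obtain S where S: "open S" "x \<in> S" "\<forall>y\<in>S. y \<noteq> x \<longrightarrow> u y < \<beta>"
      unfolding eventually_at_topological by auto
    with x have "S \<subseteq> {x. u x < \<beta>}" by auto
    with S(1,2) show "\<exists>S. open S \<and> x \<in> S \<and> S \<subseteq> {x. u x < \<beta>}" by blast
  qed
  moreover have "- {x. \<beta> \<le> u x} = {x. u x < \<beta>}" by auto
  ultimately show ?thesis by (simp add: closed_def)
qed

lemma compact_Int_nest:
  fixes f :: "'i::linorder \<Rightarrow> 'a::topological_space set"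
  assumes "compact S" "I \<noteq> {}"
    and "\<And>i. i \<in> I \<Longrightarrow> closed (f i)"
    and "\<And>i. i \<in> I \<Longrightarrow> S \<inter> f i \<noteq> {}"
    and mono: "\<And>i j. i \<in> I \<Longrightarrow> j \<in> I \<Longrightarrow> i \<le> j \<Longrightarrow> f i \<subseteq> f j"
  shows "S \<inter> (\<Inter>i\<in>I. f i) \<noteq> {}"
proof (rule compact_imp_fip_image[OF assms(1,3)])
  fix I' assume I': "finite I'" "I' \<subseteq> I"
  show "S \<inter> (\<Inter>i\<in>I'. f i) \<noteq> {}"
  proof (cases "I' = {}")
    case True
    obtain i where "i \<in> I" using assms(2) by blast
    then have "S \<noteq> {}" using assms(4) by blast
    with True show ?thesis by simp
  next
    case False
    then have min: "Min I' \<in> I'" using I'(1) by (rule Min_in[rotated])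
    have "f (Min I') \<subseteq> f i" if "i \<in> I'" for i
      using mono I'(2) min that Min_le[OF I'(1) that] by blast
    then have "f (Min I') \<subseteq> (\<Inter>i\<in>I'. f i)" by blast
    moreover have "S \<inter> f (Min I') \<noteq> {}" using min I'(2) assms(4) by blast
    ultimately show ?thesis by blast
  qed
qed

lemma upper_semicont_near_level_point:
  assumes usc: "upper_semicont u" and cpt: "compact (level u 0)" and "0 < \<alpha>"
    and near: "\<And>\<epsilon>. 0 < \<epsilon> \<Longrightarrow> \<epsilon> < \<alpha> \<Longrightarrow> \<exists>y. dist x y < d + \<epsilon> \<and> \<alpha> - \<epsilon> < u y"
  shows "\<exists>y\<in>level u \<alpha>. dist x y \<le> d"
proof -
  define F where "F \<epsilon> = cball x (d + \<epsilon>) \<inter> {y. \<alpha> - \<epsilon> \<le> u y}" for \<epsilon>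
  have "level u 0 \<inter> (\<Inter>\<epsilon>\<in>{0<..<\<alpha>}. F \<epsilon>) \<noteq> {}"
  proof (rule compact_Int_nest[OF cpt])
    show "{0<..<\<alpha>} \<noteq> {}" using \<open>0 < \<alpha>\<close> by simp
    show "closed (F \<epsilon>)" for \<epsilon>
      unfolding F_def by (intro closed_Int closed_cball upper_semicont_closed_superlevel[OF usc])
    show "level u 0 \<inter> F \<epsilon> \<noteq> {}" if \<epsilon>: "\<epsilon> \<in> {0<..<\<alpha>}" for \<epsilon>
    proof -
      obtain y where y: "dist x y < d + \<epsilon>" "\<alpha> - \<epsilon> < u y" using near \<epsilon> by auto
      then have "y \<in> {y. 0 < u y}" using \<epsilon> by simp
      then have "y \<in> level u 0" using closure_subset[of "{y. 0 < u y}"] by (auto simp: level_def)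
      moreover have "y \<in> F \<epsilon>" using y by (simp add: F_def)
      ultimately show ?thesis by blast
    qed
    show "F \<epsilon> \<subseteq> F \<epsilon>'" if "\<epsilon> \<le> \<epsilon>'" for \<epsilon> \<epsilon>'
      unfolding F_def using that by (intro Int_mono) auto
  qed
  then obtain y where "y \<in> (\<Inter>\<epsilon>\<in>{0<..<\<alpha>}. F \<epsilon>)" by blast
  then have y: "y \<in> F \<epsilon>" if "0 < \<epsilon>" "\<epsilon> < \<alpha>" for \<epsilon> using that by simp
  have "dist x y \<le> d"
  proof (rule dense_ge_bounded[of d "d + \<alpha>"])
    show "d < d + \<alpha>" using \<open>0 < \<alpha>\<close> by simp
    fix w assume "d < w" "w < d + \<alpha>"
    then show "dist x y \<le> w" using y[of "w - d"] by (simp add: F_def)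
  qed
  moreover have "\<alpha> \<le> u y"
  proof (rule dense_le_bounded[of 0])
    show "0 < \<alpha>" by fact
    fix w assume "0 < w" "w < \<alpha>"
    then show "w \<le> u y" using y[of "\<alpha> - w"] by (simp add: F_def)
  qed
  then have "y \<in> level u \<alpha>" using \<open>0 < \<alpha>\<close> by (simp add: level_def)
  ultimately show ?thesis by blast
qed

lemma endograph_point_near_level:
  assumes u: "u \<in> fuzzy_F" and p: "(x, \<beta>) \<in> endograph v"
    and "0 < \<alpha>" and "\<alpha> \<le> \<beta> - endo_dist v u"
  shows "\<exists>y\<in>level u \<alpha>. dist x y \<le> endo_dist v u"
proof (rule upper_semicont_near_level_point)
  show "upper_semicont u" "compact (level u 0)" using u by (auto simp: fuzzy_F_def)
  show "0 < \<alpha>" by fact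
  fix \<epsilon> :: real assume "0 < \<epsilon>" "\<epsilon> < \<alpha>"
  have "\<And>x. 0 \<le> u x" using u by (simp add: fuzzy_F_def)
  moreover have "endo_dist v u < endo_dist v u + \<epsilon>" using \<open>0 < \<epsilon>\<close> by simp
  ultimately obtain q where q: "q \<in> endograph u" "dbar (x, \<beta>) q < endo_dist v u + \<epsilon>"
    using endo_dist_lessD[of u, OF _ p] by blast
  obtain y \<gamma> where q_eq: "q = (y, \<gamma>)" by fastforce
  have "dist x y < endo_dist v u + \<epsilon>" "\<beta> - \<gamma> < endo_dist v u + \<epsilon>"
    using q(2) by (auto simp: q_eq dbar_def)
  moreover have "\<gamma> \<le> u y" using q(1) by (simp add: q_eq endograph_def)
  ultimately show "\<exists>y. dist x y < endo_dist v u + \<epsilon> \<and> \<alpha> - \<epsilon> < u y"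
    using assms(4) by (intro exI[of _ y] conjI) linarith+
qed

lemma endograph_point_near_charfun_set:
  assumes "(y, \<alpha>) \<in> endograph u" "endo_dist (charfun K) u < e" "e \<le> \<alpha>"
  shows "\<exists>x\<in>K. dist x y < e"
proof -
  have "\<And>x. 0 \<le> charfun K x" by (simp add: charfun_def)
  moreover have "endo_dist u (charfun K) < e" using assms(2) by (simp add: endo_dist_commute)
  ultimately obtain q where q: "q \<in> endograph (charfun K)" "dbar (y, \<alpha>) q < e"
    using endo_dist_lessD[of "charfun K", OF _ assms(1)] by blast
  obtain x \<beta> where q_eq: "q = (x, \<beta>)" by fastforce
  have "dist x y < e" "\<alpha> - \<beta> < e" using q(2) by (auto simp: q_eq dbar_def dist_commute)
  moreover have "\<beta> \<le> charfun K x" using q(1) by (simp add: q_eq endograph_def)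
  ultimately have "x \<in> K" using assms(3) by (auto simp: charfun_def split: if_splits)
  with \<open>dist x y < e\<close> show ?thesis by blast
qed

lemma fuzzy_F_level_nonempty:
  assumes "u \<in> fuzzy_F" "\<alpha> \<le> 1"
  shows "level u \<alpha> \<noteq> {}"
proof -
  have "level u 1 \<noteq> {}" using assms(1) by (simp add: fuzzy_F_def)
  then obtain z where z: "1 \<le> u z" by (auto simp: level_def)
  then have "z \<in> closure {x. 0 < u x}" using closure_subset[of "{x. 0 < u x}"] by auto
  with z assms(2) have "z \<in> level u \<alpha>" by (simp add: level_def)
  then show ?thesis by blast
qed

theorem lemma2p4:
  fixes K :: "'a::metric_space set" and u :: "'a \<Rightarrow> real" and \<delta> \<alpha> :: real
  assumes "compact K" and "K \<noteq> {}"
    and "u \<in> fuzzy_F"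
    and "\<delta> = endo_dist (charfun K) u"
    and "\<delta> < 1/2"
    and "\<delta> < \<alpha>" and "\<alpha> \<le> 1 - \<delta>"
  shows "hausdorff_dist dist K (level u \<alpha>) \<le> \<delta>"
proof -
  have u01: "0 \<le> u x" "u x \<le> 1" for x using assms(3) by (auto simp: fuzzy_F_def)
  have "0 \<le> \<delta>" unfolding assms(4) by (rule endo_dist_nonneg) (simp_all add: charfun_def u01)
  with assms(6) have "0 < \<alpha>" by simp
  then have level_\<alpha>: "level u \<alpha> = {x. \<alpha> \<le> u x}" by (simp add: level_def)
  show ?thesis
  proof (rule hausdorff_dist_le)
    show "K \<noteq> {}" by fact
    show "level u \<alpha> \<noteq> {}" using assms(3,7) \<open>0 \<le> \<delta>\<close> by (simp add: fuzzy_F_level_nonempty)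
    show "0 \<le> dist x y" for x y :: 'a by simp
  next
    fix x and e :: real assume "x \<in> K" "0 < e"
    then have "(x, 1) \<in> endograph (charfun K)" by (simp add: endograph_def charfun_def)
    moreover have "\<alpha> \<le> 1 - endo_dist (charfun K) u" using assms(4,7) by simp
    ultimately have "\<exists>y\<in>level u \<alpha>. dist x y \<le> \<delta>"
      unfolding assms(4) by (rule endograph_point_near_level[OF assms(3) _ \<open>0 < \<alpha>\<close>])
    with \<open>0 < e\<close> show "\<exists>y\<in>level u \<alpha>. dist x y < \<delta> + e" by force
  next
    fix y and e :: real assume "y \<in> level u \<alpha>" "0 < e"
    then have "(y, \<alpha>) \<in> endograph u"
      using level_\<alpha> \<open>0 < \<alpha>\<close> \<open>0 \<le> \<delta>\<close> assms(7) by (simp add: endograph_def)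
    moreover have "endo_dist (charfun K) u < min (\<delta> + e) \<alpha>" using assms(4,6) \<open>0 < e\<close> by simp
    ultimately have "\<exists>x\<in>K. dist x y < min (\<delta> + e) \<alpha>"
      by (rule endograph_point_near_charfun_set[OF _ _ min.cobounded2])
    then show "\<exists>x\<in>K. dist x y < \<delta> + e" by auto
  qed
qed

end
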